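(* Let $R\ge1$, $\Gamma\ge1$, $1\le s_1\le n_1$, $1\le s_2\le n_2$. For all $0<\varepsilon<1$, $$\log N(S^{R,\Gamma}_{s_1,s_2},\|\cdot\|_F,\varepsilon)\le R(s_1+s_2+1)\log\!\Big(\frac{18\Gamma R}{\varepsilon}\Big)+Rs_1\log\!\Big(\frac{en_1}{s_1}\Big)+Rs_2\log\!\Big(\frac{en_2}{s_2}\Big).$$
   Context: $N(M,\|\cdot\|,\varepsilon)$ is the minimal number of $\|\cdot\|$-balls of radius $\varepsilon$ needed to cover $M$. $S^{R,\Gamma}_{s_1,s_2}$ is the set of $Z=\sum_{r=1}^R\sigma_ru^r(v^r)^T\in\mathbb{R}^{n_1\times n_2}$ with $u^r\in\mathbb{R}^{n_1}$, $v^r\in\mathbb{R}^{n_2}$, $|\mathrm{supp}(u^r)|\le s_1$, $|\mathrm{supp}(v^r)|\le s_2$, $\|u^r\|_2=\|v^r\|_2=1$ for all $r$, and $\sigma\in\mathbb{R}^R$ with $\|\sigma\|_2\le\Gamma$. *)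

theory Defs
  imports "HOL-Analysis.Analysis"
begin

definition covering_number :: "'a::real_normed_vector set \<Rightarrow> real \<Rightarrow> nat" where
  "covering_number M eps =
     (LEAST k. \<exists>C. finite C \<and> card C = k \<and> M \<subseteq> (\<Union>c\<in>C. cball c eps))"

definition vsupp :: "real ^ 'n \<Rightarrow> 'n set" where
  "vsupp u = {i. u $ i \<noteq> 0}"

text \<open>Outer product u v^T as an n1 x n2 matrix. The norm on real^'n2^'n1 is the Frobenius norm.\<close>
definition outer :: "real ^ 'n1 \<Rightarrow> real ^ 'n2 \<Rightarrow> real ^ 'n2 ^ 'n1" where
  "outer u v = (\<chi> i j. u $ i * v $ j)"

definition sparse_lowrank :: "nat \<Rightarrow> real \<Rightarrow> nat \<Rightarrow> nat \<Rightarrow> (real ^ 'n2 ^ 'n1) set" where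
  "sparse_lowrank R \<Gamma> s1 s2 =
     {Z. \<exists>(\<sigma>::nat \<Rightarrow> real) (u::nat \<Rightarrow> real ^ 'n1) (v::nat \<Rightarrow> real ^ 'n2).
          Z = (\<Sum>r<R. \<sigma> r *\<^sub>R outer (u r) (v r)) \<and>
          (\<forall>r<R. card (vsupp (u r)) \<le> s1 \<and> card (vsupp (v r)) \<le> s2 \<and>
                  norm (u r) = 1 \<and> norm (v r) = 1) \<and>
          sqrt (\<Sum>r<R. (\<sigma> r)\<^sup>2) \<le> \<Gamma>}"

end

theory Submission
  imports Defs "HOL-Library.Multiset"
begin

text \<open>Each term \<open>\<sigma>\<^sub>r u\<^sup>r (v\<^sup>r)\<^sup>T\<close> is approximated by rounding \<open>\<sigma>\<^sub>r\<close> to a grid of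
  step \<open>d\<close> and the sparse unit vectors \<open>u\<^sup>r\<close>, \<open>v\<^sup>r\<close> to the lattice of spacing
  \<open>\<eta>/\<surd>s\<close>, rounding each coordinate towards zero. By the triangle inequality each term
  then moves by at most \<open>d + 2\<Gamma>\<eta>\<close>, and with \<open>d, \<eta>\<close> proportional to \<open>\<epsilon>/R\<close> the
  whole sum moves by at most \<open>\<epsilon>\<close>. Rounding towards zero keeps the lattice point
  \<open>s\<close>-sparse with \<open>\<ell>\<^sub>1\<close>-norm at most \<open>s/\<eta>\<close> (Cauchy-Schwarz), so by stars and bars
  there are at most \<open>(n choose s) 2\<^sup>s ((L+s) choose s)\<close> of them, \<open>L = \<lfloor>s/\<eta>\<rfloor>\<close>, which
  \<open>(n choose k) \<le> (e n/k)\<^sup>k\<close> turns into \<open>(e n/s)\<^sup>s (2e(1 + 1/\<eta>))\<^sup>s\<close>.\<close>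

lemma pow_div_fact_le_exp:
  fixes x :: real
  assumes "0 \<le> x"
  shows "x ^ k / fact k \<le> exp x"
proof -
  have s: "(\<lambda>n. x ^ n / fact n) sums exp x"
    using exp_converges[of x] by (simp add: divide_inverse scaleR_conv_of_real mult.commute)
  have "(\<Sum>n\<in>{k}. x ^ n / fact n) \<le> (\<Sum>n. x ^ n / fact n)"
    by (rule sum_le_suminf) (use s assms in \<open>auto simp: sums_iff\<close>)
  then show ?thesis
    using s by (simp add: sums_iff)
qed

lemma pow_div_exp_le_fact: "(real k / exp 1) ^ k \<le> fact k"
proof -
  have "real k ^ k / fact k \<le> exp (real k)"
    by (rule pow_div_fact_le_exp) simp
  also have "exp (real k) = exp 1 ^ k"
    by (simp add: exp_of_nat_mult[symmetric])
  finally have "real k ^ k \<le> exp 1 ^ k * fact k"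
    by (simp add: field_simps)
  then show ?thesis
    by (simp add: power_divide field_simps)
qed

lemma binomial_le_exp_pow:
  assumes "1 \<le> k"
  shows "real (n choose k) \<le> (exp 1 * real n / real k) ^ k"
proof (cases "k \<le> n")
  case False
  then show ?thesis by (simp add: binomial_eq_0)
next
  case True
  have "fact k * (n choose k) = fact n div fact (n - k)"
    using binomial_fact_lemma[OF True]
    by (metis div_mult_self1_is_m fact_gt_zero mult.commute mult.left_commute)
  also have "\<dots> \<le> n ^ k"
    by (rule fact_div_fact_le_pow[OF True])
  finally have "real (fact k * (n choose k)) \<le> real (n ^ k)"
    by (simp only: of_nat_le_iff)
  then have "fact k * real (n choose k) \<le> real n ^ k"
    by simp
  then have "(real k / exp 1) ^ k * real (n choose k) \<le> real n ^ k"
    by (rule order_trans[OF mult_right_mono[OF pow_div_exp_le_fact], rotated]) simp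
  then have "real (n choose k) \<le> real n ^ k / (real k / exp 1) ^ k"
    using assms by (simp add: field_simps)
  also have "\<dots> = (exp 1 * real n / real k) ^ k"
    by (simp add: power_divide field_simps)
  finally show ?thesis .
qed

text \<open>Stars and bars: \<open>f\<close> is encoded as the multiset with \<open>f i\<close> copies of \<open>Some i\<close>,
  padded with copies of \<open>None\<close> to size \<open>L\<close>.\<close>

lemma card_PiE_sum_le_binomial:
  assumes "finite S"
  shows "card {f. f \<in> S \<rightarrow>\<^sub>E (UNIV :: nat set) \<and> (\<Sum>i\<in>S. f i) \<le> L}
           \<le> (L + card S) choose card S"
    (is "card ?F \<le> _")
proof -
  define \<psi> where "\<psi> f = (\<Sum>i\<in>S. replicate_mset (f i) (Some i))
                        + replicate_mset (L - (\<Sum>i\<in>S. f i)) None" for f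
  have count_\<psi>: "count (\<psi> f) (Some i) = f i" if "i \<in> S" for f i
    using assms that
    by (simp add: \<psi>_def count_sum count_replicate_mset sum.delta' if_distrib cong: if_cong)
  have inj: "inj_on \<psi> ?F"
  proof (rule inj_onI)
    fix f g assume f: "f \<in> ?F" and g: "g \<in> ?F" and eq: "\<psi> f = \<psi> g"
    show "f = g"
    proof (rule PiE_ext)
      show "f \<in> S \<rightarrow>\<^sub>E UNIV" "g \<in> S \<rightarrow>\<^sub>E UNIV" using f g by auto
    next
      fix i assume "i \<in> S"
      then show "f i = g i" using count_\<psi>[of i f] count_\<psi>[of i g] eq by simp
    qed
  qed
  have sub: "\<psi> ` ?F \<subseteq> multisets_of_size (insert None (Some ` S)) L"
  proof
    fix M assume "M \<in> \<psi> ` ?F"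
    then obtain f where f: "f \<in> ?F" and M: "M = \<psi> f" by blast
    have "count M x = 0" if "x \<notin> insert None (Some ` S)" for x
      using that by (auto simp: M \<psi>_def count_sum count_replicate_mset intro!: sum.neutral)
    then have "set_mset M \<subseteq> insert None (Some ` S)"
      by (meson count_eq_zero_iff subsetI)
    moreover have "size M = L" using f by (simp add: M \<psi>_def)
    ultimately show "M \<in> multisets_of_size (insert None (Some ` S)) L"
      by (simp add: multisets_of_size_def)
  qed
  have "card ?F = card (\<psi> ` ?F)"
    using inj by (simp add: card_image)
  also have "\<dots> \<le> card (multisets_of_size (insert None (Some ` S)) L)"
    by (rule card_mono[OF _ sub]) (use assms in \<open>simp add: finite_multisets_of_size\<close>)
  also have "\<dots> = (card S + 1 + L - 1) choose L"
    using assms by (simp add: card_multisets_of_size card_image)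
  also have "\<dots> = (L + card S) choose card S"
    using binomial_symmetric[of L "L + card S"] by (simp add: add.commute)
  finally show ?thesis .
qed

definition int_l1_ball_on :: "'a set \<Rightarrow> nat \<Rightarrow> ('a \<Rightarrow> int) set" where
  "int_l1_ball_on S L = {k. (\<forall>i. i \<notin> S \<longrightarrow> k i = 0) \<and> (\<Sum>i\<in>S. nat \<bar>k i\<bar>) \<le> L}"

text \<open>A point is determined by its signs and absolute values on \<open>S\<close>.\<close>

lemma finite_card_int_l1_ball_on:
  assumes "finite S"
  shows "finite (int_l1_ball_on S L)"
    and "card (int_l1_ball_on S L) \<le> 2 ^ card S * ((L + card S) choose card S)"
proof -
  define F where "F = {f. f \<in> S \<rightarrow>\<^sub>E (UNIV :: nat set) \<and> (\<Sum>i\<in>S. f i) \<le> L}"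
  define \<phi> where "\<phi> k = (restrict (\<lambda>i. 0 \<le> k i) S, restrict (\<lambda>i. nat \<bar>k i\<bar>) S)" for k :: "'a \<Rightarrow> int"
  have inj: "inj_on \<phi> (int_l1_ball_on S L)"
  proof (rule inj_onI)
    fix k k' assume k: "k \<in> int_l1_ball_on S L" and k': "k' \<in> int_l1_ball_on S L"
      and eq: "\<phi> k = \<phi> k'"
    show "k = k'"
    proof
      fix i show "k i = k' i"
      proof (cases "i \<in> S")
        case True
        then have "(0 \<le> k i) = (0 \<le> k' i)" "nat \<bar>k i\<bar> = nat \<bar>k' i\<bar>"
          using eq by (auto simp: \<phi>_def fun_eq_iff dest: spec[of _ i])
        then show ?thesis by arith
      next
        case False
        then show ?thesis using k k' by (auto simp: int_l1_ball_on_def)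
      qed
    qed
  qed
  have "F \<subseteq> S \<rightarrow>\<^sub>E {..L}"
  proof
    fix f assume f: "f \<in> F"
    have "f i \<le> L" if "i \<in> S" for i
      using f member_le_sum[OF that, of f] assms by (auto simp: F_def)
    then show "f \<in> S \<rightarrow>\<^sub>E {..L}" using f by (auto simp: F_def)
  qed
  then have "finite F"
    using assms by (meson finite_PiE finite_atMost finite_subset)
  then have fin: "finite ((S \<rightarrow>\<^sub>E (UNIV :: bool set)) \<times> F)"
    using assms by (simp add: finite_PiE)
  have sub: "\<phi> ` int_l1_ball_on S L \<subseteq> (S \<rightarrow>\<^sub>E (UNIV :: bool set)) \<times> F"
    by (auto simp: \<phi>_def F_def int_l1_ball_on_def)
  show "finite (int_l1_ball_on S L)"
    using finite_imageD[OF finite_subset[OF sub fin] inj] .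
  have "card (int_l1_ball_on S L) \<le> card ((S \<rightarrow>\<^sub>E (UNIV :: bool set)) \<times> F)"
    using card_mono[OF fin sub] card_image[OF inj] by simp
  also have "\<dots> = 2 ^ card S * card F"
    using assms by (simp add: card_cartesian_product card_PiE)
  also have "\<dots> \<le> 2 ^ card S * ((L + card S) choose card S)"
    unfolding F_def using card_PiE_sum_le_binomial[OF assms] by simp
  finally show "card (int_l1_ball_on S L) \<le> 2 ^ card S * ((L + card S) choose card S)" .
qed

definition sparse_int_l1_ball :: "nat \<Rightarrow> nat \<Rightarrow> ('n::finite \<Rightarrow> int) set" where
  "sparse_int_l1_ball s L = {k. card {i. k i \<noteq> 0} \<le> s \<and> (\<Sum>i\<in>UNIV. nat \<bar>k i\<bar>) \<le> L}"

lemma sparse_int_l1_ball_subset_Union: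
  assumes "s \<le> CARD('n::finite)"
  shows "(sparse_int_l1_ball s L :: ('n \<Rightarrow> int) set)
           \<subseteq> (\<Union>S\<in>{S. card S = s}. int_l1_ball_on S L)"
proof
  fix k :: "'n \<Rightarrow> int"
  assume k: "k \<in> sparse_int_l1_ball s L"
  define A where "A = {i. k i \<noteq> 0}"
  have "card A \<le> s"
    using k by (simp add: sparse_int_l1_ball_def A_def)
  moreover have "s - card A \<le> card (UNIV - A)"
    using assms by (simp add: card_Diff_subset)
  then obtain T where T: "T \<subseteq> UNIV - A" "card T = s - card A" "finite T"
    by (rule obtain_subset_with_card_n)
  ultimately have "card (A \<union> T) = s"
    by (subst card_Un_disjoint) auto
  moreover have "(\<Sum>i\<in>A \<union> T. nat \<bar>k i\<bar>) = (\<Sum>i\<in>UNIV. nat \<bar>k i\<bar>)"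
    by (rule sum.mono_neutral_left) (auto simp: A_def)
  then have "k \<in> int_l1_ball_on (A \<union> T) L"
    using k by (auto simp: int_l1_ball_on_def sparse_int_l1_ball_def A_def)
  ultimately show "k \<in> (\<Union>S\<in>{S. card S = s}. int_l1_ball_on S L)" by blast
qed

lemma finite_card_sparse_int_l1_ball:
  assumes "s \<le> CARD('n::finite)"
  shows "finite (sparse_int_l1_ball s L :: ('n \<Rightarrow> int) set)"
    and "card (sparse_int_l1_ball s L :: ('n \<Rightarrow> int) set)
           \<le> (CARD('n) choose s) * (2 ^ s * ((L + s) choose s))"
proof -
  let ?U = "\<Union>S\<in>{S :: 'n set. card S = s}. int_l1_ball_on S L"
  have finU: "finite ?U"
    by (auto intro: finite_card_int_l1_ball_on)
  note sub = sparse_int_l1_ball_subset_Union[OF assms, of L]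
  show "finite (sparse_int_l1_ball s L :: ('n \<Rightarrow> int) set)"
    using finite_subset[OF sub finU] .
  have "card (sparse_int_l1_ball s L :: ('n \<Rightarrow> int) set) \<le> card ?U"
    by (rule card_mono[OF finU sub])
  also have "\<dots> \<le> (\<Sum>S\<in>{S :: 'n set. card S = s}. card (int_l1_ball_on S L))"
    by (rule card_UN_le) simp
  also have "\<dots> \<le> (\<Sum>S\<in>{S :: 'n set. card S = s}. 2 ^ s * ((L + s) choose s))"
  proof (rule sum_mono)
    fix S :: "'n set"
    assume "S \<in> {S. card S = s}"
    then show "card (int_l1_ball_on S L) \<le> 2 ^ s * ((L + s) choose s)"
      using finite_card_int_l1_ball_on(2)[of S L] by simp
  qed
  also have "\<dots> = (CARD('n) choose s) * (2 ^ s * ((L + s) choose s))"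
    using n_subsets[of "UNIV :: 'n set" s] by simp
  finally show "card (sparse_int_l1_ball s L :: ('n \<Rightarrow> int) set)
           \<le> (CARD('n) choose s) * (2 ^ s * ((L + s) choose s))" .
qed

definition round_to_zero :: "real \<Rightarrow> int" where
  "round_to_zero x = (if 0 \<le> x then \<lfloor>x\<rfloor> else - \<lfloor>- x\<rfloor>)"

lemma round_to_zero_0 [simp]: "round_to_zero 0 = 0"
  by (simp add: round_to_zero_def)

lemma abs_round_to_zero_le: "\<bar>real_of_int (round_to_zero x)\<bar> \<le> \<bar>x\<bar>"
  by (auto simp: round_to_zero_def)

lemma abs_diff_round_to_zero_less: "\<bar>x - real_of_int (round_to_zero x)\<bar> < 1"
  by (auto simp: round_to_zero_def)
    (smt (verit) real_of_int_floor_add_one_gt of_int_floor_le)+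

lemma scaled_round_to_zero:
  assumes "0 < \<delta>"
  shows "\<bar>\<delta> * real_of_int (round_to_zero (x / \<delta>))\<bar> \<le> \<bar>x\<bar>"
    and "\<bar>x - \<delta> * real_of_int (round_to_zero (x / \<delta>))\<bar> < \<delta>"
proof -
  have "\<bar>real_of_int (round_to_zero (x / \<delta>))\<bar> \<le> \<bar>x\<bar> / \<delta>"
    using abs_round_to_zero_le[of "x / \<delta>"] assms by simp
  then show "\<bar>\<delta> * real_of_int (round_to_zero (x / \<delta>))\<bar> \<le> \<bar>x\<bar>"
    using assms by (simp add: abs_mult field_simps)
  have "x - \<delta> * real_of_int (round_to_zero (x / \<delta>))
        = \<delta> * (x / \<delta> - real_of_int (round_to_zero (x / \<delta>)))"
    using assms by (simp add: field_simps)
  then show "\<bar>x - \<delta> * real_of_int (round_to_zero (x / \<delta>))\<bar> < \<delta>"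
    using abs_diff_round_to_zero_less[of "x / \<delta>"] assms by (simp add: abs_mult)
qed

lemma bounded_real_grid_net:
  assumes "0 < d" "0 \<le> \<Gamma>"
  obtains G :: "real set"
  where "finite G" "real (card G) \<le> 2 * \<Gamma> / d + 1"
    "\<And>a. \<bar>a\<bar> \<le> \<Gamma> \<Longrightarrow> \<exists>a'\<in>G. \<bar>a - a'\<bar> \<le> d \<and> \<bar>a'\<bar> \<le> \<Gamma>"
proof
  define J where "J = \<lfloor>\<Gamma> / d\<rfloor>"
  define G where "G = (\<lambda>j. d * real_of_int j) ` {- J..J}"
  show "finite G" by (simp add: G_def)
  have "card G \<le> card {- J..J}"
    unfolding G_def by (rule card_image_le) simp
  moreover have "0 \<le> J" "real_of_int J \<le> \<Gamma> / d"
    using assms by (simp_all add: J_def)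
  ultimately show "real (card G) \<le> 2 * \<Gamma> / d + 1"
    by (simp add: nat_le_iff_add) linarith
  fix a :: real
  assume a: "\<bar>a\<bar> \<le> \<Gamma>"
  have "\<bar>real_of_int (round_to_zero (a / d))\<bar> \<le> \<bar>a\<bar> / d"
    using abs_round_to_zero_le[of "a / d"] assms by simp
  also have "\<dots> \<le> \<Gamma> / d"
    using a assms by (simp add: divide_right_mono)
  finally have "\<bar>real_of_int (round_to_zero (a / d))\<bar> \<le> \<Gamma> / d" .
  then have "round_to_zero (a / d) \<le> J" "- round_to_zero (a / d) \<le> J"
    unfolding J_def by (simp_all add: le_floor_iff abs_le_iff)
  then have "round_to_zero (a / d) \<in> {- J..J}"
    by simp
  then show "\<exists>a'\<in>G. \<bar>a - a'\<bar> \<le> d \<and> \<bar>a'\<bar> \<le> \<Gamma>"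
    using scaled_round_to_zero[OF assms(1), of a] a unfolding G_def by force
qed

lemma norm_vec_eq_sqrt_sum: "norm (x :: real ^ 'n) = sqrt (\<Sum>i\<in>UNIV. (x $ i)\<^sup>2)"
  by (simp add: norm_vec_def L2_set_def)

lemma sum_abs_le_sqrt_card_vsupp_mult_norm:
  fixes u :: "real ^ 'n"
  shows "(\<Sum>i\<in>UNIV. \<bar>u $ i\<bar>) \<le> sqrt (real (card (vsupp u))) * norm u"
proof -
  define g where "g i = (if i \<in> vsupp u then 1 else (0 :: real))" for i
  have "(\<Sum>i\<in>UNIV. \<bar>u $ i\<bar>) = (\<Sum>i\<in>UNIV. \<bar>u $ i\<bar> * \<bar>g i\<bar>)"
    by (rule sum.cong) (auto simp: g_def vsupp_def)
  also have "\<dots> \<le> L2_set (\<lambda>i. u $ i) UNIV * L2_set g UNIV"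
    by (rule L2_set_mult_ineq)
  also have "L2_set g UNIV = sqrt (real (card (vsupp u)))"
  proof -
    have "(\<Sum>i\<in>UNIV. (g i)\<^sup>2) = (\<Sum>i\<in>vsupp u. 1)"
      by (subst sum.mono_neutral_right[of UNIV "vsupp u"]) (auto simp: g_def)
    then show ?thesis by (simp add: L2_set_def)
  qed
  also have "L2_set (\<lambda>i. u $ i) UNIV = norm u"
    by (simp add: norm_vec_eq_sqrt_sum L2_set_def)
  finally show ?thesis by (simp add: mult.commute)
qed

definition sparse_grid :: "nat \<Rightarrow> real \<Rightarrow> nat \<Rightarrow> (real ^ 'n::finite) set" where
  "sparse_grid s \<delta> L = (\<lambda>k. \<chi> i. \<delta> * real_of_int (k i)) ` sparse_int_l1_ball s L"

lemma sparse_grid_approx: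
  fixes u :: "real ^ 'n::finite"
  assumes "norm u = 1" "card (vsupp u) \<le> s" "1 \<le> s" "0 < \<eta>"
  shows "\<exists>w\<in>sparse_grid s (\<eta> / sqrt s) (nat \<lfloor>s / \<eta>\<rfloor>). norm (u - w) \<le> \<eta> \<and> norm w \<le> 1"
proof -
  define \<delta> where "\<delta> = \<eta> / sqrt s"
  have \<delta>: "0 < \<delta>" using assms by (simp add: \<delta>_def)
  define k where "k i = round_to_zero (u $ i / \<delta>)" for i
  define w :: "real ^ 'n" where "w = (\<chi> i. \<delta> * real_of_int (k i))"
  have "{i. k i \<noteq> 0} \<subseteq> vsupp u"
    by (auto simp: k_def vsupp_def)
  then have sparse: "card {i. k i \<noteq> 0} \<le> s"
    using assms(2) by (meson card_mono finite order_trans)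
  have "real (\<Sum>i\<in>UNIV. nat \<bar>k i\<bar>) = (\<Sum>i\<in>UNIV. \<bar>real_of_int (k i)\<bar>)"
    by simp
  also have "\<dots> \<le> (\<Sum>i\<in>UNIV. \<bar>u $ i\<bar> / \<delta>)"
  proof (rule sum_mono)
    fix i
    show "\<bar>real_of_int (k i)\<bar> \<le> \<bar>u $ i\<bar> / \<delta>"
      using abs_round_to_zero_le[of "u $ i / \<delta>"] \<delta> by (simp add: k_def)
  qed
  also have "\<dots> = (\<Sum>i\<in>UNIV. \<bar>u $ i\<bar>) / \<delta>"
    by (simp add: sum_divide_distrib)
  also have "\<dots> \<le> sqrt s / \<delta>"
    using sum_abs_le_sqrt_card_vsupp_mult_norm[of u] assms(1,2) \<delta>
    by (intro divide_right_mono) (auto intro: order_trans)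
  also have "\<dots> = s / \<eta>"
    using assms(3,4) by (simp add: \<delta>_def field_simps)
  finally have "w \<in> sparse_grid s \<delta> (nat \<lfloor>s / \<eta>\<rfloor>)"
    unfolding sparse_grid_def sparse_int_l1_ball_def w_def using sparse
    by (simp add: le_nat_floor)
  moreover have "norm w \<le> 1"
    unfolding assms(1)[symmetric] w_def k_def
    by (rule norm_le_componentwise_cart) (simp add: scaled_round_to_zero(1)[OF \<delta>])
  moreover have "norm (u - w) \<le> \<eta>"
  proof -
    have "(\<Sum>i\<in>UNIV. ((u - w) $ i)\<^sup>2) = (\<Sum>i\<in>vsupp u. ((u - w) $ i)\<^sup>2)"
      by (rule sum.mono_neutral_right) (auto simp: vsupp_def w_def k_def)
    also have "\<dots> \<le> (\<Sum>i\<in>vsupp u. \<delta>\<^sup>2)"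
    proof (rule sum_mono)
      fix i
      have "\<bar>(u - w) $ i\<bar> \<le> \<delta>"
        using scaled_round_to_zero(2)[OF \<delta>, of "u $ i"] by (simp add: w_def k_def)
      then show "((u - w) $ i)\<^sup>2 \<le> \<delta>\<^sup>2"
        by (metis abs_ge_zero power2_abs power_mono)
    qed
    also have "\<dots> \<le> s * \<delta>\<^sup>2"
      using assms(2) by (simp add: mult_right_mono)
    also have "\<dots> = \<eta>\<^sup>2"
      using assms(3) by (simp add: \<delta>_def power_divide)
    finally show ?thesis
      using assms(4) by (simp add: norm_vec_eq_sqrt_sum real_le_lsqrt less_imp_le)
  qed
  ultimately show ?thesis unfolding \<delta>_def by blast
qed

lemma finite_card_sparse_grid:
  assumes "1 \<le> s" "s \<le> CARD('n::finite)" "0 < \<eta>"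
  shows "finite (sparse_grid s \<delta> (nat \<lfloor>s / \<eta>\<rfloor>) :: (real ^ 'n) set)"
    and "real (card (sparse_grid s \<delta> (nat \<lfloor>s / \<eta>\<rfloor>) :: (real ^ 'n) set))
           \<le> (exp 1 * real CARD('n) / real s) ^ s * (2 * exp 1 * (1 + 1 / \<eta>)) ^ s"
proof -
  define L where "L = nat \<lfloor>s / \<eta>\<rfloor>"
  note ball = finite_card_sparse_int_l1_ball[OF assms(2), of L]
  show "finite (sparse_grid s \<delta> (nat \<lfloor>s / \<eta>\<rfloor>) :: (real ^ 'n) set)"
    using ball(1) by (simp add: sparse_grid_def L_def)
  have "card (sparse_grid s \<delta> L :: (real ^ 'n) set) \<le> card (sparse_int_l1_ball s L :: ('n \<Rightarrow> int) set)"
    unfolding sparse_grid_def by (rule card_image_le[OF ball(1)])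
  also note ball(2)
  finally have "real (card (sparse_grid s \<delta> L :: (real ^ 'n) set))
               \<le> real ((CARD('n) choose s) * (2 ^ s * ((L + s) choose s)))"
    by (simp only: of_nat_le_iff)
  also have "\<dots> = real (CARD('n) choose s) * (2 ^ s * real ((L + s) choose s))"
    by simp
  also have "\<dots> \<le> (exp 1 * real CARD('n) / real s) ^ s * (2 ^ s * (exp 1 * real (L + s) / real s) ^ s)"
    using assms(1) by (intro mult_mono binomial_le_exp_pow mult_left_mono) auto
  also have "2 ^ s * (exp 1 * real (L + s) / real s) ^ s = (2 * exp 1 * (real L / s + 1)) ^ s"
    using assms(1) by (simp add: power_mult_distrib[symmetric] field_simps)
  also have "\<dots> \<le> (2 * exp 1 * (1 + 1 / \<eta>)) ^ s"
  proof (intro power_mono mult_left_mono)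
    have "real L \<le> s / \<eta>"
      using assms(3) by (simp add: L_def)
    then show "real L / s + 1 \<le> 1 + 1 / \<eta>"
      using assms(1) by (simp add: field_simps)
  qed simp_all
  finally show "real (card (sparse_grid s \<delta> (nat \<lfloor>s / \<eta>\<rfloor>) :: (real ^ 'n) set))
           \<le> (exp 1 * real CARD('n) / real s) ^ s * (2 * exp 1 * (1 + 1 / \<eta>)) ^ s"
    by (simp add: L_def mult_left_mono)
qed

lemma sparse_unit_vector_net:
  assumes "1 \<le> s" "s \<le> CARD('n::finite)" "0 < \<eta>"
  obtains G :: "(real ^ 'n) set"
  where "finite G"
    "real (card G) \<le> (exp 1 * real CARD('n) / real s) ^ s * (2 * exp 1 * (1 + 1 / \<eta>)) ^ s"
    "\<And>u. norm u = 1 \<Longrightarrow> card (vsupp u) \<le> s \<Longrightarrow> \<exists>w\<in>G. norm (u - w) \<le> \<eta> \<and> norm w \<le> 1"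
  using finite_card_sparse_grid[OF assms] sparse_grid_approx[OF _ _ assms(1,3)] by blast

lemma norm_outer: "norm (outer (u :: real ^ 'n1::finite) (v :: real ^ 'n2::finite)) = norm u * norm v"
proof -
  have row: "outer u v $ i = (u $ i) *\<^sub>R v" for i
    by (simp add: outer_def vec_eq_iff)
  have "norm (outer u v) = L2_set (\<lambda>i. norm (outer u v $ i)) UNIV"
    by (rule norm_vec_def)
  also have "\<dots> = L2_set (\<lambda>i. \<bar>u $ i\<bar> * norm v) UNIV"
    by (simp only: row norm_scaleR)
  also have "\<dots> = L2_set (\<lambda>i. \<bar>u $ i\<bar>) UNIV * norm v"
    by (rule L2_set_left_distrib[symmetric]) simp
  also have "L2_set (\<lambda>i. \<bar>u $ i\<bar>) UNIV = norm u"
    by (simp only: norm_vec_def real_norm_def)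
  finally show ?thesis .
qed

lemma norm_scaleR_outer_diff_le:
  fixes p p' :: "real ^ 'n1::finite" and q q' :: "real ^ 'n2::finite"
  assumes "norm p = 1" "norm q = 1" "norm p' \<le> 1"
    and "norm (p - p') \<le> \<eta>" "norm (q - q') \<le> \<eta>" "\<bar>a - a'\<bar> \<le> d" "\<bar>a'\<bar> \<le> \<Gamma>"
  shows "norm (a *\<^sub>R outer p q - a' *\<^sub>R outer p' q') \<le> d + 2 * \<Gamma> * \<eta>"
proof -
  have split: "a *\<^sub>R outer p q - a' *\<^sub>R outer p' q' =
          (a - a') *\<^sub>R outer p q + a' *\<^sub>R outer (p - p') q + a' *\<^sub>R outer p' (q - q')"
    by (simp add: outer_def vec_eq_iff algebra_simps)
  have "norm (a *\<^sub>R outer p q - a' *\<^sub>R outer p' q')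
      \<le> norm ((a - a') *\<^sub>R outer p q) + norm (a' *\<^sub>R outer (p - p') q) + norm (a' *\<^sub>R outer p' (q - q'))"
    unfolding split by (meson norm_triangle_ineq order_trans add_right_mono)
  also have "\<dots> = \<bar>a - a'\<bar> + \<bar>a'\<bar> * norm (p - p') + \<bar>a'\<bar> * (norm p' * norm (q - q'))"
    using assms by (simp add: norm_outer)
  also have "\<dots> \<le> d + \<Gamma> * \<eta> + \<Gamma> * (1 * \<eta>)"
    using assms order_trans[OF norm_ge_zero assms(4)] by (intro add_mono mult_mono) auto
  finally show ?thesis by simp
qed

lemma sparse_lowrank_approx_by_nets:
  fixes Gs :: "real set" and Gu :: "(real ^ 'n1::finite) set" and Gv :: "(real ^ 'n2::finite) set"
  assumes Gs: "\<And>a. \<bar>a\<bar> \<le> \<Gamma> \<Longrightarrow> \<exists>a'\<in>Gs. \<bar>a - a'\<bar> \<le> d \<and> \<bar>a'\<bar> \<le> \<Gamma>"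
    and Gu: "\<And>u. norm u = 1 \<Longrightarrow> card (vsupp u) \<le> s1 \<Longrightarrow> \<exists>w\<in>Gu. norm (u - w) \<le> \<eta> \<and> norm w \<le> 1"
    and Gv: "\<And>v. norm v = 1 \<Longrightarrow> card (vsupp v) \<le> s2 \<Longrightarrow> \<exists>w\<in>Gv. norm (v - w) \<le> \<eta>"
    and Z: "Z \<in> sparse_lowrank R \<Gamma> s1 s2"
  obtains \<sigma>' u' v' where "\<sigma>' \<in> {..<R} \<rightarrow>\<^sub>E Gs" "u' \<in> {..<R} \<rightarrow>\<^sub>E Gu" "v' \<in> {..<R} \<rightarrow>\<^sub>E Gv"
    "norm (Z - (\<Sum>r<R. \<sigma>' r *\<^sub>R outer (u' r) (v' r))) \<le> real R * (d + 2 * \<Gamma> * \<eta>)"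
proof -
  obtain \<sigma> u v where Z_eq: "Z = (\<Sum>r<R. \<sigma> r *\<^sub>R outer (u r) (v r))"
    and uv: "\<And>r. r < R \<Longrightarrow> card (vsupp (u r)) \<le> s1 \<and> card (vsupp (v r)) \<le> s2
                              \<and> norm (u r) = 1 \<and> norm (v r) = 1"
    and \<sigma>: "sqrt (\<Sum>r<R. (\<sigma> r)\<^sup>2) \<le> \<Gamma>"
    using Z unfolding sparse_lowrank_def by blast
  have "\<bar>\<sigma> r\<bar> \<le> \<Gamma>" if "r < R" for r
    using member_le_L2_set[of "{..<R}" r "\<lambda>r. \<bar>\<sigma> r\<bar>"] that \<sigma> by (simp add: L2_set_def)
  then have "\<forall>r\<in>{..<R}. \<exists>a'\<in>Gs. \<bar>\<sigma> r - a'\<bar> \<le> d \<and> \<bar>a'\<bar> \<le> \<Gamma>"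
    using Gs by blast
  then obtain \<sigma>' where \<sigma>': "\<And>r. r < R \<Longrightarrow> \<sigma>' r \<in> Gs \<and> \<bar>\<sigma> r - \<sigma>' r\<bar> \<le> d \<and> \<bar>\<sigma>' r\<bar> \<le> \<Gamma>"
    by (metis lessThan_iff)
  have "\<forall>r\<in>{..<R}. \<exists>w\<in>Gu. norm (u r - w) \<le> \<eta> \<and> norm w \<le> 1"
    using Gu uv by blast
  then obtain u' where u': "\<And>r. r < R \<Longrightarrow> u' r \<in> Gu \<and> norm (u r - u' r) \<le> \<eta> \<and> norm (u' r) \<le> 1"
    by (metis lessThan_iff)
  have "\<forall>r\<in>{..<R}. \<exists>w\<in>Gv. norm (v r - w) \<le> \<eta>"
    using Gv uv by blast
  then obtain v' where v': "\<And>r. r < R \<Longrightarrow> v' r \<in> Gv \<and> norm (v r - v' r) \<le> \<eta>"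
    by (metis lessThan_iff)
  let ?Z' = "\<Sum>r<R. restrict \<sigma>' {..<R} r *\<^sub>R outer (restrict u' {..<R} r) (restrict v' {..<R} r)"
  have "norm (Z - ?Z') = norm (\<Sum>r<R. \<sigma> r *\<^sub>R outer (u r) (v r) - \<sigma>' r *\<^sub>R outer (u' r) (v' r))"
    by (simp add: Z_eq sum_subtractf)
  also have "\<dots> \<le> (\<Sum>r<R. norm (\<sigma> r *\<^sub>R outer (u r) (v r) - \<sigma>' r *\<^sub>R outer (u' r) (v' r)))"
    by (rule norm_sum)
  also have "\<dots> \<le> (\<Sum>r<R. d + 2 * \<Gamma> * \<eta>)"
    using uv \<sigma>' u' v' by (intro sum_mono norm_scaleR_outer_diff_le) auto
  finally show ?thesis
    using that[of "restrict \<sigma>' {..<R}" "restrict u' {..<R}" "restrict v' {..<R}"] \<sigma>' u' v'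
    by auto
qed

lemma covering_number_le_card:
  assumes "finite C" "M \<subseteq> (\<Union>c\<in>C. cball c \<epsilon>)"
  shows "covering_number M \<epsilon> \<le> card C"
  unfolding covering_number_def by (rule Least_le) (use assms in blast)

lemma covering_number_sparse_lowrank_le_nets:
  fixes Gs :: "real set" and Gu :: "(real ^ 'n1::finite) set" and Gv :: "(real ^ 'n2::finite) set"
  assumes "finite Gs" "finite Gu" "finite Gv"
    and "\<And>a. \<bar>a\<bar> \<le> \<Gamma> \<Longrightarrow> \<exists>a'\<in>Gs. \<bar>a - a'\<bar> \<le> d \<and> \<bar>a'\<bar> \<le> \<Gamma>"
    and "\<And>u. norm u = 1 \<Longrightarrow> card (vsupp u) \<le> s1 \<Longrightarrow> \<exists>w\<in>Gu. norm (u - w) \<le> \<eta> \<and> norm w \<le> 1"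
    and "\<And>v. norm v = 1 \<Longrightarrow> card (vsupp v) \<le> s2 \<Longrightarrow> \<exists>w\<in>Gv. norm (v - w) \<le> \<eta>"
    and "real R * (d + 2 * \<Gamma> * \<eta>) \<le> \<epsilon>"
  shows "covering_number (sparse_lowrank R \<Gamma> s1 s2 :: (real ^ 'n2 ^ 'n1) set) \<epsilon>
           \<le> card Gs ^ R * card Gu ^ R * card Gv ^ R"
proof -
  define Dom where "Dom = ({..<R} \<rightarrow>\<^sub>E Gs) \<times> ({..<R} \<rightarrow>\<^sub>E Gu) \<times> ({..<R} \<rightarrow>\<^sub>E Gv)"
  define C where "C = (\<lambda>(\<sigma>', u', v'). \<Sum>r<R. \<sigma>' r *\<^sub>R outer (u' r) (v' r)) ` Dom"
  have fin: "finite Dom"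
    using assms(1-3) by (simp add: Dom_def finite_PiE)
  have "sparse_lowrank R \<Gamma> s1 s2 \<subseteq> (\<Union>c\<in>C. cball c \<epsilon>)"
  proof
    fix Z assume Z: "Z \<in> (sparse_lowrank R \<Gamma> s1 s2 :: (real ^ 'n2 ^ 'n1) set)"
    obtain \<sigma>' u' v' where "\<sigma>' \<in> {..<R} \<rightarrow>\<^sub>E Gs" "u' \<in> {..<R} \<rightarrow>\<^sub>E Gu" "v' \<in> {..<R} \<rightarrow>\<^sub>E Gv"
      and approx: "norm (Z - (\<Sum>r<R. \<sigma>' r *\<^sub>R outer (u' r) (v' r))) \<le> real R * (d + 2 * \<Gamma> * \<eta>)"
      by (rule sparse_lowrank_approx_by_nets[OF assms(4-6) Z])
    then have "(\<sigma>', u', v') \<in> Dom"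
      by (simp add: Dom_def)
    then have "(\<Sum>r<R. \<sigma>' r *\<^sub>R outer (u' r) (v' r)) \<in> C"
      unfolding C_def by (rule rev_image_eqI) simp
    moreover have "Z \<in> cball (\<Sum>r<R. \<sigma>' r *\<^sub>R outer (u' r) (v' r)) \<epsilon>"
      using approx assms(7) by (simp add: dist_norm norm_minus_commute)
    ultimately show "Z \<in> (\<Union>c\<in>C. cball c \<epsilon>)"
      by blast
  qed
  then have "covering_number (sparse_lowrank R \<Gamma> s1 s2 :: (real ^ 'n2 ^ 'n1) set) \<epsilon> \<le> card C"
    using fin by (intro covering_number_le_card) (simp_all add: C_def)
  also have "card C \<le> card Dom"
    unfolding C_def using fin by (rule card_image_le)
  also have "card Dom = card Gs ^ R * card Gu ^ R * card Gv ^ R"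
    by (simp add: Dom_def card_cartesian_product card_PiE)
  finally show ?thesis .
qed

lemma one_le_exp_mult_div:
  assumes "1 \<le> s" "s \<le> n"
  shows "1 \<le> exp 1 * real n / real s"
proof -
  have "1 \<le> real n / real s" "(1 :: real) \<le> exp 1"
    using assms by simp_all
  then show ?thesis
    using mult_mono[of 1 "exp 1" 1 "real n / real s"] by simp
qed

lemma one_le_mult_div:
  assumes "1 \<le> R" "1 \<le> \<Gamma>" "0 < \<epsilon>" "\<epsilon> < 1"
  shows "1 \<le> \<Gamma> * real R / \<epsilon>"
proof -
  have "1 \<le> \<Gamma> * real R"
    using assms(1,2) mult_mono[of 1 \<Gamma> 1 "real R"] by simp
  then show ?thesis
    using assms(3,4) by (simp add: le_divide_eq)
qed

lemma covering_number_sparse_lowrank_le_grids: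
  assumes "1 \<le> s1" "s1 \<le> CARD('n1::finite)" "1 \<le> s2" "s2 \<le> CARD('n2::finite)"
    and "0 < d" "0 < \<eta>" "0 \<le> \<Gamma>" "real R * (d + 2 * \<Gamma> * \<eta>) \<le> \<epsilon>"
  defines "F \<equiv> 2 * exp 1 * (1 + 1 / \<eta>)"
  shows "real (covering_number (sparse_lowrank R \<Gamma> s1 s2 :: (real ^ 'n2 ^ 'n1) set) \<epsilon>)
           \<le> ((2 * \<Gamma> / d + 1)
               * ((exp 1 * real CARD('n1) / real s1) ^ s1 * F ^ s1)
               * ((exp 1 * real CARD('n2) / real s2) ^ s2 * F ^ s2)) ^ R"
proof -
  obtain Gs where Gs: "finite Gs" "real (card Gs) \<le> 2 * \<Gamma> / d + 1"
    "\<And>a. \<bar>a\<bar> \<le> \<Gamma> \<Longrightarrow> \<exists>a'\<in>Gs. \<bar>a - a'\<bar> \<le> d \<and> \<bar>a'\<bar> \<le> \<Gamma>"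
    using bounded_real_grid_net[OF assms(5,7)] by blast
  obtain Gu :: "(real ^ 'n1) set" where Gu: "finite Gu"
    "real (card Gu) \<le> (exp 1 * real CARD('n1) / real s1) ^ s1 * F ^ s1"
    "\<And>u. norm u = 1 \<Longrightarrow> card (vsupp u) \<le> s1 \<Longrightarrow> \<exists>w\<in>Gu. norm (u - w) \<le> \<eta> \<and> norm w \<le> 1"
    using sparse_unit_vector_net[OF assms(1,2,6)] unfolding F_def by metis
  obtain Gv :: "(real ^ 'n2) set" where Gv: "finite Gv"
    "real (card Gv) \<le> (exp 1 * real CARD('n2) / real s2) ^ s2 * F ^ s2"
    "\<And>v. norm v = 1 \<Longrightarrow> card (vsupp v) \<le> s2 \<Longrightarrow> \<exists>w\<in>Gv. norm (v - w) \<le> \<eta>"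
    using sparse_unit_vector_net[OF assms(3,4,6)] unfolding F_def by metis
  have "covering_number (sparse_lowrank R \<Gamma> s1 s2 :: (real ^ 'n2 ^ 'n1) set) \<epsilon>
          \<le> card Gs ^ R * card Gu ^ R * card Gv ^ R"
    by (rule covering_number_sparse_lowrank_le_nets[OF Gs(1) Gu(1) Gv(1)])
      (fact Gs(3) Gu(3) Gv(3) assms(8))+
  then have "real (covering_number (sparse_lowrank R \<Gamma> s1 s2 :: (real ^ 'n2 ^ 'n1) set) \<epsilon>)
               \<le> real (card Gs ^ R * card Gu ^ R * card Gv ^ R)"
    by (simp only: of_nat_le_iff)
  also have "\<dots> = (real (card Gs) * real (card Gu) * real (card Gv)) ^ R"
    by (simp add: power_mult_distrib)
  also have "\<dots> \<le> ((2 * \<Gamma> / d + 1)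
               * ((exp 1 * real CARD('n1) / real s1) ^ s1 * F ^ s1)
               * ((exp 1 * real CARD('n2) / real s2) ^ s2 * F ^ s2)) ^ R"
    using Gs(2) Gu(2) Gv(2) by (intro power_mono mult_mono) auto
  finally show ?thesis .
qed

lemma exp_affine_le_self:
  fixes x :: real
  assumes "18 \<le> x"
  shows "2 * exp 1 * (1 + 25 / 198 * x) \<le> x"
proof -
  have "2 * exp 1 * (1 + 25 / 198 * x) = 2 * exp 1 + 25 / 99 * (exp 1 * x)"
    by (simp add: algebra_simps)
  moreover have "exp 1 * 18 \<le> exp 1 * x" "exp 1 * x \<le> 272 / 100 * x"
    using e_less_272 assms by (simp_all add: mult_right_mono)
  ultimately show ?thesis
    using assms by linarith
qed

lemma covering_number_sparse_lowrank_le: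
  assumes "1 \<le> R" "1 \<le> \<Gamma>"
    and "1 \<le> s1" "s1 \<le> CARD('n1::finite)" "1 \<le> s2" "s2 \<le> CARD('n2::finite)"
    and "0 < \<epsilon>" "\<epsilon> < 1"
  defines "x \<equiv> 18 * \<Gamma> * real R / \<epsilon>"
  shows "real (covering_number (sparse_lowrank R \<Gamma> s1 s2 :: (real ^ 'n2 ^ 'n1) set) \<epsilon>)
           \<le> (x * ((exp 1 * real CARD('n1) / real s1) ^ s1 * x ^ s1)
                * ((exp 1 * real CARD('n2) / real s2) ^ s2 * x ^ s2)) ^ R"
proof -
  have x: "18 \<le> x"
    using one_le_mult_div[OF assms(1,2,7,8)] assms(7) by (simp add: x_def field_simps)
  \<comment> \<open>\<open>d + 2\<Gamma>\<eta> = \<epsilon>/R\<close>, with \<open>d\<close> and \<open>\<eta>\<close> balanced so that every net has at most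
    \<open>x\<close> points per factor.\<close>
  define d where "d = 3 / 25 * \<epsilon> / real R"
  define \<eta> where "\<eta> = 11 / 25 * \<epsilon> / (real R * \<Gamma>)"
  have "real R * (d + 2 * \<Gamma> * \<eta>) = \<epsilon>"
    using assms(1,2) by (simp add: d_def \<eta>_def field_simps)
  then have "real (covering_number (sparse_lowrank R \<Gamma> s1 s2 :: (real ^ 'n2 ^ 'n1) set) \<epsilon>)
      \<le> ((2 * \<Gamma> / d + 1)
          * ((exp 1 * real CARD('n1) / real s1) ^ s1 * (2 * exp 1 * (1 + 1 / \<eta>)) ^ s1)
          * ((exp 1 * real CARD('n2) / real s2) ^ s2 * (2 * exp 1 * (1 + 1 / \<eta>)) ^ s2)) ^ R"
    using assms(1-7) by (intro covering_number_sparse_lowrank_le_grids) (simp_all add: d_def \<eta>_def)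
  also have "\<dots> \<le> (x * ((exp 1 * real CARD('n1) / real s1) ^ s1 * x ^ s1)
                    * ((exp 1 * real CARD('n2) / real s2) ^ s2 * x ^ s2)) ^ R"
  proof -
    have "2 * \<Gamma> / d + 1 \<le> x"
      using x assms(1,7) by (simp add: d_def x_def field_simps)
    moreover have "1 / \<eta> = 25 / 198 * x"
      using assms(1,2,7) by (simp add: \<eta>_def x_def field_simps)
    then have "2 * exp 1 * (1 + 1 / \<eta>) \<le> x"
      using exp_affine_le_self[OF x] by (simp only:)
    moreover have "0 \<le> x"
      using x by simp
    ultimately show ?thesis
      using assms(1,2,7) by (intro power_mono mult_mono) (simp_all add: d_def \<eta>_def)
  qed
  finally show ?thesis .
qed

lemma ln_power_prod:
  fixes a b c :: real
  assumes "0 < a" "0 < b" "0 < c"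
  shows "ln ((a * (b ^ k * a ^ k) * (c ^ l * a ^ l)) ^ R)
           = real R * real (k + l + 1) * ln a + real R * real k * ln b + real R * real l * ln c"
  using assms by (simp add: ln_mult ln_realpow algebra_simps)

theorem mainTheorem9:
  fixes R s1 s2 :: nat and \<Gamma> \<epsilon> :: real
  assumes "R \<ge> 1" and "\<Gamma> \<ge> 1"
    and "1 \<le> s1" and "s1 \<le> CARD('n1::finite)"
    and "1 \<le> s2" and "s2 \<le> CARD('n2::finite)"
    and "0 < \<epsilon>" and "\<epsilon> < 1"
  shows "ln (real (covering_number
            (sparse_lowrank R \<Gamma> s1 s2 :: (real ^ 'n2 ^ 'n1) set) \<epsilon>))
         \<le> real R * real (s1 + s2 + 1) * ln (18 * \<Gamma> * real R / \<epsilon>)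
           + real R * real s1 * ln (exp 1 * real CARD('n1) / real s1)
           + real R * real s2 * ln (exp 1 * real CARD('n2) / real s2)"
proof -
  let ?N = "covering_number (sparse_lowrank R \<Gamma> s1 s2 :: (real ^ 'n2 ^ 'n1) set) \<epsilon>"
  let ?x = "18 * \<Gamma> * real R / \<epsilon>"
  let ?A1 = "exp 1 * real CARD('n1) / real s1" and ?A2 = "exp 1 * real CARD('n2) / real s2"
  have "1 \<le> ?x"
    using one_le_mult_div[OF assms(1,2,7,8)] assms(7) by (simp add: field_simps)
  moreover have "1 \<le> ?A1" "1 \<le> ?A2"
    using one_le_exp_mult_div assms(3-6) by blast+
  ultimately have B: "1 \<le> (?x * (?A1 ^ s1 * ?x ^ s1) * (?A2 ^ s2 * ?x ^ s2)) ^ R"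
    by (intro one_le_power mult_ge1_I)
  have "ln (real ?N) \<le> ln ((?x * (?A1 ^ s1 * ?x ^ s1) * (?A2 ^ s2 * ?x ^ s2)) ^ R)"
  proof (cases "?N = 0")
    case True
    then show ?thesis using B by simp
  next
    case False
    then show ?thesis
      using covering_number_sparse_lowrank_le[OF assms] by (intro ln_mono) auto
  qed
  also have "\<dots> = real R * real (s1 + s2 + 1) * ln ?x + real R * real s1 * ln ?A1
                   + real R * real s2 * ln ?A2"
    using \<open>1 \<le> ?x\<close> \<open>1 \<le> ?A1\<close> \<open>1 \<le> ?A2\<close> by (intro ln_power_prod) simp_all
  finally show ?thesis .
qed

end
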